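(* Assume $\delta d_0>2$, let $t=d_0/2$, $\varepsilon_0=\frac{d_0}{2}-\frac1\delta$, and $\gamma=\left(1+\frac ct\right)^{-1}\frac{\delta d_0-1}{d_0-1}\alpha$. Let $G=(L\cup R,E)$ be a $(c,d,\alpha,\delta)$-bipartite expander with $L=[n]$, $C_0\subseteq\mathbb{F}_2^d$ a linear code of minimum distance $d_0$, $x\in\mathbb{F}_2^n$ and $y\in T(G,C_0)$ with $d_H(x,y)\le\gamma n$. Then $\mathsf{DeepFlip}(x)$ outputs an element $x'\in\mathbb{F}_2^n$, in $O(|F(x,y)|)$ time, such that $|F(x',y)|\le\frac12|F(x,y)|$.
   Context: Binary linear codes, Hamming distance $d_H$. A bipartite graph $G=(L\cup R,E)$ is $(c,d)$-regular if left degrees are $c$ and right degrees $d$; $N(S)$ is the neighborhood of $S$. A $(c,d,\alpha,\delta)$-bipartite expander ($c,d$ positive integers, $\alpha,\delta\in(0,1]$, all constants) is a $(c,d)$-regular bipartite graph with $|N(S)|\ge\delta c|S|$ for every $S\subseteq L$, $|S|\le\alpha|L|$. Tanner code: $L=[n]$, for each $v\in R$ a fixed ordering of $N(v)$ defines $x_{N(v)}\in\mathbb{F}_2^d$, and $T(G,C_0)=\{x: x_{N(v)}\in C_0\ \forall v\in R\}$. $F(x,y)=\{i\in[n]:x_i\ne y_i\}$; $U(x)=\{v\in R: x_{N(v)}\notin C_0\}$. $\mathsf{Decode}(z)$ for $z\in\mathbb{F}_2^d$ is the codeword of $C_0$ closest to $z$, ties broken lexicographically. $W=\{\frac{i}{cd_0}: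 i\in\mathbb{Z},0\le i\le cd_0\}$. $\mathsf{DeterFlip}(x,q)$ for $q\in\mathbb{R}$: set $p_1=\dots=p_n=0$; for each $v\in R$, let $w_v=\mathsf{Decode}(x_{N(v)})$; if $1\le d_H(w_v,x_{N(v)})<t$, let $i$ be the smallest element of $N(v)$ where $w_v$ and $x_{N(v)}$ differ and increase $p_i$ by $\frac{t-d_H(w_v,x_{N(v)})}{ct}$; then flip every $x_i$ with $p_i=q$ and return the result. $\mathsf{DeepFlip}(x)$: let $\varepsilon=\frac{\varepsilon_0\delta}{2ct^2}$ and $s=\left\lceil\log\left(\frac{\delta d_0-1}{2(d_0-1)}\right)/\log(1-\varepsilon)\right\rceil$; set $k_{\min}=|R|+1$, $x_{\min}=\perp$. For each $(q_1,\dots,q_s)\in(W\setminus\{0\})^s$: set $x^{(0)}=x$ and for $i=1,\dots,s$ set $x^{(i)}=\mathsf{DeterFlip}(x^{(i-1)},q_i)$; if $|U(x^{(i)})|>c\gamma n$ abandon this sequence; otherwise, if $i=s$ and $|U(x^{(s)})|<k_{\min}$, set $k_{\min}=|U(x^{(s)})|$ and $x_{\min}=x^{(s)}$. Return $x_{\min}$. Running time is in the RAM model with adjacency lists, with $U(x)$ and the $p_i$ maintained in data structures (initialized once beforehand) allowing $U(x)$ to be enumerated in $O(|U(x)|)$ time and updated in $O(1)$ time per bit flip; constants may depend on $c,d,\alpha,\delta,C_0$. *)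

theory Defs
  imports Complex_Main
begin

text \<open>Binary words are bool lists (False = 0, True = 1); addition over F_2 is xor.
  Left vertices are 0..<n, right vertices are a finite set R of naturals, and
  nbr v is the fixed ordering of N(v).\<close>

definition hdist :: "bool list \<Rightarrow> bool list \<Rightarrow> nat" where
  "hdist a b = card {i. i < length a \<and> a ! i \<noteq> b ! i}"

definition Fset :: "nat \<Rightarrow> bool list \<Rightarrow> bool list \<Rightarrow> nat set" where
  "Fset n x y = {i. i < n \<and> x ! i \<noteq> y ! i}"

definition linear_code :: "nat \<Rightarrow> bool list set \<Rightarrow> bool" where
  "linear_code d C0 \<longleftrightarrow> C0 \<noteq> {} \<and> (\<forall>w\<in>C0. length w = d)
     \<and> (\<forall>a\<in>C0. \<forall>b\<in>C0. map2 (\<noteq>) a b \<in> C0)"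

definition min_dist :: "bool list set \<Rightarrow> nat \<Rightarrow> bool" where
  "min_dist C0 d0 \<longleftrightarrow> (\<exists>a\<in>C0. \<exists>b\<in>C0. a \<noteq> b \<and> hdist a b = d0)
     \<and> (\<forall>a\<in>C0. \<forall>b\<in>C0. a \<noteq> b \<longrightarrow> d0 \<le> hdist a b)"

definition restr :: "(nat \<Rightarrow> nat list) \<Rightarrow> bool list \<Rightarrow> nat \<Rightarrow> bool list" where
  "restr nbr x v = map (\<lambda>i. x ! i) (nbr v)"

definition Nb :: "nat set \<Rightarrow> (nat \<Rightarrow> nat list) \<Rightarrow> nat set \<Rightarrow> nat set" where
  "Nb R nbr S = {v \<in> R. \<exists>i\<in>S. i \<in> set (nbr v)}"

definition bipartite_expander ::
  "nat \<Rightarrow> nat set \<Rightarrow> (nat \<Rightarrow> nat list) \<Rightarrow> nat \<Rightarrow> nat \<Rightarrow> real \<Rightarrow> real \<Rightarrow> bool" where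
  "bipartite_expander n R nbr c d \<alpha> \<delta> \<longleftrightarrow>
     finite R
     \<and> (\<forall>v\<in>R. length (nbr v) = d \<and> distinct (nbr v) \<and> set (nbr v) \<subseteq> {..<n})
     \<and> (\<forall>i<n. card {v\<in>R. i \<in> set (nbr v)} = c)
     \<and> (\<forall>S. S \<subseteq> {..<n} \<longrightarrow> real (card S) \<le> \<alpha> * real n
            \<longrightarrow> real (card (Nb R nbr S)) \<ge> \<delta> * real c * real (card S))"

definition tanner :: "nat \<Rightarrow> nat set \<Rightarrow> (nat \<Rightarrow> nat list) \<Rightarrow> bool list set \<Rightarrow> bool list set" where
  "tanner n R nbr C0 = {x. length x = n \<and> (\<forall>v\<in>R. restr nbr x v \<in> C0)}"

definition Uset :: "nat set \<Rightarrow> (nat \<Rightarrow> nat list) \<Rightarrow> bool list set \<Rightarrow> bool list \<Rightarrow> nat set" where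
  "Uset R nbr C0 x = {v\<in>R. restr nbr x v \<notin> C0}"

definition decode :: "bool list set \<Rightarrow> bool list \<Rightarrow> bool list" where
  "decode C0 z = (let M = {w\<in>C0. \<forall>w'\<in>C0. hdist w z \<le> hdist w' z} in
     THE w. w \<in> M \<and> (\<forall>w'\<in>M. w = w' \<or> ord_class.lexordp w w'))"

definition pval :: "nat set \<Rightarrow> (nat \<Rightarrow> nat list) \<Rightarrow> bool list set \<Rightarrow> nat \<Rightarrow> real
     \<Rightarrow> bool list \<Rightarrow> nat \<Rightarrow> real" where
  "pval R nbr C0 c t x i =
     (\<Sum>v\<in>{v\<in>R. let w = decode C0 (restr nbr x v); h = hdist w (restr nbr x v) in
              1 \<le> h \<and> real h < t \<and>
              i = Min {nbr v ! k | k. k < length (nbr v) \<and> w ! k \<noteq> x ! (nbr v ! k)}}.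
        (t - real (hdist (decode C0 (restr nbr x v)) (restr nbr x v))) / (real c * t))"

definition deterflip :: "nat \<Rightarrow> nat set \<Rightarrow> (nat \<Rightarrow> nat list) \<Rightarrow> bool list set \<Rightarrow> nat
     \<Rightarrow> real \<Rightarrow> bool list \<Rightarrow> real \<Rightarrow> bool list" where
  "deterflip n R nbr C0 c t x q =
     map (\<lambda>i. if pval R nbr C0 c t x i = q then \<not> (x ! i) else x ! i) [0..<n]"

text \<open>Abstract cost of one DeterFlip call together with the subsequent abandon test,
  in the model where U(x) is maintained: O(1 + |U(x)| + |U(x')|) (every flipped bit is
  charged to a distinct unsatisfied check of the input).\<close>
definition step_cost :: "nat set \<Rightarrow> (nat \<Rightarrow> nat list) \<Rightarrow> bool list set
     \<Rightarrow> bool list \<Rightarrow> bool list \<Rightarrow> nat" where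
  "step_cost R nbr C0 x x' = 1 + card (Uset R nbr C0 x) + card (Uset R nbr C0 x')"

text \<open>Running one sequence (q_1,...,q_s): result (None = abandoned) and cost.\<close>
fun run_seq :: "nat \<Rightarrow> nat set \<Rightarrow> (nat \<Rightarrow> nat list) \<Rightarrow> bool list set \<Rightarrow> nat \<Rightarrow> real
     \<Rightarrow> real \<Rightarrow> bool list \<Rightarrow> real list \<Rightarrow> bool list option \<times> nat" where
  "run_seq n R nbr C0 c t \<gamma> x [] = (Some x, 0)"
| "run_seq n R nbr C0 c t \<gamma> x (q # qs) =
     (let x' = deterflip n R nbr C0 c t x q; k = step_cost R nbr C0 x x' in
      if real (card (Uset R nbr C0 x')) > real c * \<gamma> * real n then (None, k)
      else (let (r, k') = run_seq n R nbr C0 c t \<gamma> x' qs in (r, k + k')))"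

text \<open>DeepFlip, with the sequences of (W - {0})^s processed in the order of the list
  seqs; state = (k_min, x_min, accumulated cost).\<close>
definition deepflip_run :: "nat \<Rightarrow> nat set \<Rightarrow> (nat \<Rightarrow> nat list) \<Rightarrow> bool list set \<Rightarrow> nat
     \<Rightarrow> real \<Rightarrow> real \<Rightarrow> real list list \<Rightarrow> bool list \<Rightarrow> bool list option \<times> nat" where
  "deepflip_run n R nbr C0 c t \<gamma> seqs x =
     (let (kmin, xmin, cost) =
        fold (\<lambda>qs (kmin, xmin, cost).
                 let (r, k) = run_seq n R nbr C0 c t \<gamma> x qs in
                 (case r of
                    Some xs \<Rightarrow> if card (Uset R nbr C0 xs) < kmin
                               then (card (Uset R nbr C0 xs), Some xs, cost + k)
                               else (kmin, xmin, cost + k)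
                  | None \<Rightarrow> (kmin, xmin, cost + k)))
             seqs (card R + 1, None, 0)
      in (xmin, cost))"

definition Wset :: "nat \<Rightarrow> nat \<Rightarrow> real set" where
  "Wset c d0 = {real i / (real c * real d0) | i. i \<le> c * d0}"

end

theory Submission
  imports Defs
begin

text \<open>
  Let F be the set of positions where x and the codeword y differ. In DeterFlip a check whose
  local view is at distance h, 1 \<le> h < t, from its nearest codeword gives the vote
  (t - h)/(ct) to the first position where the two differ. A check seeing fewer than t errors
  decodes correctly, and one that decodes wrongly sees at least d0 - h errors, so the votes
  counted positively on F and negatively off F add up to at least (t |N(F)| - c |F|)/(ct),
  which expansion bounds below by |F| (t\<delta> - 1)/t. Grouping positions by their total vote
  p_i \<in> W and averaging over the at most c d0 nonzero values, some threshold q flips at least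
  \<epsilon> |F| more errors than correct bits; iterating, some sequence in (W - {0})^s leaves at most
  (1 - \<epsilon>)^s |F| \<le> (\<delta> d0 - 1)/(2 (d0 - 1)) |F| errors.

  A single step multiplies |F| by at most 1 + c/t, and the abandon test |U| \<le> c\<gamma>n brings it
  back below \<alpha>n t/(t + c), so every surviving sequence stays where expansion applies. There
  c |F| (\<delta> d0 - 1)/(d0 - 1) \<le> |U| \<le> c |F|, and the output, which minimises |U| over the
  surviving sequences, therefore has at most |F|/2 errors. Each of the |W - {0}|^s sequences
  costs O((1 + c/t)^s |F|).
\<close>

section \<open>Hamming distance and nearest-codeword decoding\<close>

lemma hdist_self [simp]: "hdist a a = 0"
  unfolding hdist_def by simp

lemma hdist_commute: "length a = length b \<Longrightarrow> hdist a b = hdist b a"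
  unfolding hdist_def by metis

lemma hdist_eq_0_iff: "length a = length b \<Longrightarrow> hdist a b = 0 \<longleftrightarrow> a = b"
  unfolding hdist_def by (auto intro: nth_equalityI)

lemma hdist_triangle:
  assumes "length a = length b" "length b = length c"
  shows "hdist a c \<le> hdist a b + hdist b c"
proof -
  let ?D = "\<lambda>u v. {i. i < length u \<and> u ! i \<noteq> v ! i}"
  have "?D a c \<subseteq> ?D a b \<union> ?D b c"
    using assms by auto
  then have "card (?D a c) \<le> card (?D a b \<union> ?D b c)"
    by (intro card_mono) auto
  also have "\<dots> \<le> card (?D a b) + card (?D b c)"
    by (rule card_Un_le)
  finally show ?thesis
    unfolding hdist_def .
qed

lemma finite_has_lexordp_least:
  fixes M :: "'a::linorder list set"
  assumes "finite M" "M \<noteq> {}"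
  shows "\<exists>w\<in>M. \<forall>w'\<in>M. w = w' \<or> ord_class.lexordp w w'"
  using assms
proof (induction M rule: finite_ne_induct)
  case (singleton x)
  then show ?case by auto
next
  case (insert x F)
  then obtain w where w: "w \<in> F" "\<forall>w'\<in>F. w = w' \<or> ord_class.lexordp w w'"
    by auto
  show ?case
  proof (cases "ord_class.lexordp x w")
    case True
    then show ?thesis
      using w by (auto intro: lexordp_trans)
  next
    case False
    then show ?thesis
      using w lexordp_linear[of x w] by auto
  qed
qed

lemma decode_closest:
  assumes "finite C0" "C0 \<noteq> {}"
  shows decode_in_code: "decode C0 z \<in> C0"
    and decode_dist_le: "w \<in> C0 \<Longrightarrow> hdist (decode C0 z) z \<le> hdist w z"
proof -
  define M where "M = {u\<in>C0. \<forall>u'\<in>C0. hdist u z \<le> hdist u' z}"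
  have "arg_min_on (\<lambda>u. hdist u z) C0 \<in> M"
    unfolding M_def by (auto intro: arg_min_if_finite(1)[OF assms] arg_min_least[OF assms])
  then have "M \<noteq> {}" "finite M"
    unfolding M_def using assms(1) by auto
  then obtain m where m: "m \<in> M" "\<forall>u\<in>M. m = u \<or> ord_class.lexordp m u"
    using finite_has_lexordp_least by blast
  have uniq: "\<exists>!m. m \<in> M \<and> (\<forall>u\<in>M. m = u \<or> ord_class.lexordp m u)"
  proof (rule ex1I[of _ m])
    show "m \<in> M \<and> (\<forall>u\<in>M. m = u \<or> ord_class.lexordp m u)"
      using m by blast
  next
    fix m'
    assume m': "m' \<in> M \<and> (\<forall>u\<in>M. m' = u \<or> ord_class.lexordp m' u)"
    show "m' = m"
    proof (rule ccontr)
      assume "m' \<noteq> m"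
      then have "ord_class.lexordp m' m" "ord_class.lexordp m m'"
        using m m' by auto
      then show False
        by (rule lexordp_antisym)
    qed
  qed
  have "decode C0 z = (THE m. m \<in> M \<and> (\<forall>u\<in>M. m = u \<or> ord_class.lexordp m u))"
    unfolding decode_def M_def Let_def by simp
  then have "decode C0 z \<in> M"
    using theI'[OF uniq] by simp
  then show "decode C0 z \<in> C0" "w \<in> C0 \<Longrightarrow> hdist (decode C0 z) z \<le> hdist w z"
    unfolding M_def by auto
qed

section \<open>The threshold set W and averaging\<close>

lemma finite_Wset: "finite (Wset c d0)"
proof -
  have "Wset c d0 = (\<lambda>i. real i / (real c * real d0)) ` {..c * d0}"
    unfolding Wset_def by auto
  then show ?thesis
    by simp
qed

lemma card_Wset_nonzero_le: "card (Wset c d0 - {0}) \<le> c * d0"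
proof -
  have "Wset c d0 - {0} \<subseteq> (\<lambda>i. real i / (real c * real d0)) ` {1..c * d0}"
    unfolding Wset_def by (auto simp: Suc_le_eq)
  then have "card (Wset c d0 - {0}) \<le> card ((\<lambda>i. real i / (real c * real d0)) ` {1..c * d0})"
    by (intro card_mono) auto
  also have "\<dots> \<le> c * d0"
    using card_image_le[of "{1..c * d0}"] by simp
  finally show ?thesis .
qed

lemma Wset_bounds:
  assumes "0 < c" "0 < d0" "q \<in> Wset c d0"
  shows "0 \<le> q" "q \<le> 1"
proof -
  obtain i where "q = real i / (real c * real d0)" "i \<le> c * d0"
    using assms(3) unfolding Wset_def by auto
  moreover have "real i \<le> real c * real d0"
    using \<open>i \<le> c * d0\<close> by (metis of_nat_le_iff of_nat_mult)
  ultimately show "0 \<le> q" "q \<le> 1"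
    using assms(1,2) by auto
qed

lemma one_in_Wset: "0 < c \<Longrightarrow> 0 < d0 \<Longrightarrow> 1 \<in> Wset c d0"
  unfolding Wset_def by (rule CollectI, rule exI[of _ "c * d0"]) simp

lemma ex_ge_average_of_weighted_sum:
  fixes w D :: "'a \<Rightarrow> real"
  assumes "finite Q" "Q \<noteq> {}" "\<And>q. q \<in> Q \<Longrightarrow> 0 < w q \<and> w q \<le> 1"
    and "0 \<le> X" "X \<le> (\<Sum>q\<in>Q. w q * D q)"
  shows "\<exists>q\<in>Q. X / card Q \<le> D q"
proof (rule ccontr)
  assume "\<not> ?thesis"
  then have small: "D q < X / card Q" if "q \<in> Q" for q
    using that by auto
  have "w q * D q < X / card Q" if "q \<in> Q" for q
  proof (cases "0 \<le> D q")
    case True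
    then have "w q * D q \<le> D q"
      using assms(3)[OF that] by (simp add: mult_left_le_one_le)
    then show ?thesis
      using small[OF that] by linarith
  next
    case False
    then have "w q * D q < 0"
      using assms(3)[OF that] by (simp add: mult_pos_neg)
    moreover have "0 \<le> X / card Q"
      using assms(4) by simp
    ultimately show ?thesis
      by linarith
  qed
  then have "(\<Sum>q\<in>Q. w q * D q) < (\<Sum>q\<in>Q. X / card Q)"
    by (rule sum_strict_mono[OF assms(1,2)])
  also have "\<dots> = X"
    using assms(1,2) by simp
  finally show False
    using assms(5) by simp
qed

lemma power_ceiling_log_le:
  fixes e A :: real
  assumes "0 < e" "e < 1" "0 < A"
  shows "(1 - e) ^ nat \<lceil>ln A / ln (1 - e)\<rceil> \<le> A"
proof -
  define m where "m = nat \<lceil>ln A / ln (1 - e)\<rceil>"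
  have neg: "ln (1 - e) < 0"
    using assms(1,2) by simp
  have "ln A / ln (1 - e) \<le> real m"
    unfolding m_def by linarith
  then have "real m * ln (1 - e) \<le> ln A"
    using neg by (simp add: pos_divide_le_eq neg_divide_le_eq mult.commute)
  then have "exp (real m * ln (1 - e)) \<le> A"
    using assms(3) by (metis exp_le_cancel_iff exp_ln)
  moreover have "(1 - e) ^ m = exp (real m * ln (1 - e))"
    using assms(2) by (simp add: exp_of_nat_mult)
  ultimately show ?thesis
    unfolding m_def by simp
qed

section \<open>DeepFlip as a fold\<close>

definition deepflip_step ::
  "('q \<Rightarrow> 'a option \<times> nat) \<Rightarrow> ('a \<Rightarrow> nat) \<Rightarrow> 'q \<Rightarrow> nat \<times> 'a option \<times> nat \<Rightarrow> nat \<times> 'a option \<times> nat"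
  where
  "deepflip_step run u = (\<lambda>qs (kmin, xmin, cost).
     let (r, k) = run qs in
     (case r of
        Some xs \<Rightarrow> if u xs < kmin then (u xs, Some xs, cost + k) else (kmin, xmin, cost + k)
      | None \<Rightarrow> (kmin, xmin, cost + k)))"

lemma snd_run_seq_Cons_le:
  "snd (run_seq n R nbr C0 c t \<gamma> x (q # qs))
     \<le> step_cost R nbr C0 x (deterflip n R nbr C0 c t x q)
       + snd (run_seq n R nbr C0 c t \<gamma> (deterflip n R nbr C0 c t x q) qs)"
  by (simp add: Let_def split: prod.split)

lemma deepflip_run_eq_fold:
  "deepflip_run n R nbr C0 c t \<gamma> seqs x =
     (let st = fold (deepflip_step (run_seq n R nbr C0 c t \<gamma> x) (\<lambda>z. card (Uset R nbr C0 z)))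
                 seqs (card R + 1, None, 0)
      in (fst (snd st), snd (snd st)))"
  unfolding deepflip_run_def deepflip_step_def by (simp add: case_prod_beta)

lemma fold_deepflip_step_cost:
  "snd (snd (fold (deepflip_step run u) L s)) = snd (snd s) + (\<Sum>qs\<leftarrow>L. snd (run qs))"
proof (induction L arbitrary: s)
  case (Cons a L)
  have "snd (snd (deepflip_step run u a s)) = snd (snd s) + snd (run a)"
    unfolding deepflip_step_def by (cases s; cases "run a"; cases "fst (run a)") auto
  then show ?case
    using Cons.IH by simp
qed simp

lemma fold_deepflip_step_le:
  "fst (fold (deepflip_step run u) L s) \<le> fst s
   \<and> (\<forall>a\<in>set L. \<forall>z. fst (run a) = Some z \<longrightarrow> fst (fold (deepflip_step run u) L s) \<le> u z)"
proof (induction L arbitrary: s)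
  case (Cons a L)
  have "fst (deepflip_step run u a s) \<le> fst s"
    "\<forall>z. fst (run a) = Some z \<longrightarrow> fst (deepflip_step run u a s) \<le> u z"
    unfolding deepflip_step_def by (cases s; cases "run a"; cases "fst (run a)"; auto)+
  then show ?case
    using Cons.IH[of "deepflip_step run u a s"] by (auto intro: order_trans)
qed simp

lemma fold_deepflip_step_result:
  "fst (fold (deepflip_step run u) L s) = fst s \<and> fst (snd (fold (deepflip_step run u) L s)) = fst (snd s)
   \<or> (\<exists>a\<in>set L. \<exists>z. fst (run a) = Some z \<and> fst (snd (fold (deepflip_step run u) L s)) = Some z
        \<and> fst (fold (deepflip_step run u) L s) = u z)"
proof (induction L arbitrary: s)
  case (Cons a L)
  have "fst (deepflip_step run u a s) = fst s \<and> fst (snd (deepflip_step run u a s)) = fst (snd s)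
    \<or> (\<exists>z. fst (run a) = Some z \<and> fst (snd (deepflip_step run u a s)) = Some z
         \<and> fst (deepflip_step run u a s) = u z)"
    unfolding deepflip_step_def by (cases s; cases "run a"; cases "fst (run a)") auto
  then show ?case
    using Cons.IH[of "deepflip_step run u a s"] by auto
qed simp

lemma fold_deepflip_step_selects_min:
  assumes "a \<in> set L" "fst (run a) = Some z" "u z < N"
  shows "\<exists>b\<in>set L. \<exists>z'. fst (run b) = Some z'
           \<and> fst (snd (fold (deepflip_step run u) L (N, None, k))) = Some z' \<and> u z' \<le> u z"
proof -
  let ?st = "fold (deepflip_step run u) L (N, None, k)"
  have "fst ?st \<le> u z"
    using fold_deepflip_step_le[of run u L "(N, None, k)"] assms(1,2) by blast
  then have "fst ?st \<noteq> N"
    using assms(3) by simp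
  then show ?thesis
    using fold_deepflip_step_result[of run u L "(N, None, k)"] \<open>fst ?st \<le> u z\<close> by auto
qed

section \<open>Local decoding at the checks\<close>

locale tanner_decoding =
  fixes n :: nat and R :: "nat set" and nbr :: "nat \<Rightarrow> nat list" and c d d0 :: nat
    and \<alpha> \<delta> :: real and C0 :: "bool list set" and y :: "bool list"
  assumes expander: "bipartite_expander n R nbr c d \<alpha> \<delta>"
    and code_nonempty: "C0 \<noteq> {}" and code_length: "w \<in> C0 \<Longrightarrow> length w = d"
    and min_dist: "min_dist C0 d0"
    and c_pos: "0 < c" and \<alpha>_pos: "0 < \<alpha>" and \<delta>_le_1: "\<delta> \<le> 1"
    and \<delta>_d0_gt_2: "\<delta> * real d0 > 2"
    and y_tanner: "y \<in> tanner n R nbr C0"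
begin

abbreviation "t \<equiv> real d0 / 2"

text \<open>err x is F(x, y). In DeterFlip(x, q) a check v votes when 1 \<le> d_H(w_v, x_N(v)) < t, and
  then adds vote_weight x v to p at position target x v.\<close>
definition "err x = Fset n x y"
definition "err_at x v = card (set (nbr v) \<inter> err x)"
definition "dec x v = decode C0 (restr nbr x v)"
definition "dec_dist x v = hdist (dec x v) (restr nbr x v)"
definition "votes x v \<longleftrightarrow> 1 \<le> dec_dist x v \<and> real (dec_dist x v) < t"
definition "target x v = Min {nbr v ! k | k. k < length (nbr v) \<and> dec x v ! k \<noteq> x ! (nbr v ! k)}"
definition "vote_weight x v = (t - real (dec_dist x v)) / (real c * t)"

lemma finite_R: "finite R"
  and nbr_length: "v \<in> R \<Longrightarrow> length (nbr v) = d"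
  and nbr_distinct: "v \<in> R \<Longrightarrow> distinct (nbr v)"
  and nbr_subset: "v \<in> R \<Longrightarrow> set (nbr v) \<subseteq> {..<n}"
  and left_degree: "i < n \<Longrightarrow> card {v\<in>R. i \<in> set (nbr v)} = c"
  and expansion: "S \<subseteq> {..<n} \<Longrightarrow> real (card S) \<le> \<alpha> * real n
                   \<Longrightarrow> \<delta> * real c * real (card S) \<le> real (card (Nb R nbr S))"
  using expander unfolding bipartite_expander_def by auto

lemma finite_code: "finite C0"
proof -
  have "finite {w::bool list. set w \<subseteq> UNIV \<and> length w = d}"
    by (rule finite_lists_length_eq) simp
  then show ?thesis
    by (rule finite_subset[rotated]) (auto simp: code_length)
qed

lemma code_dist: "a \<in> C0 \<Longrightarrow> b \<in> C0 \<Longrightarrow> a \<noteq> b \<Longrightarrow> d0 \<le> hdist a b"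
  using min_dist unfolding min_dist_def by auto

lemma d0_gt_2: "real d0 > 2"
  using \<delta>_d0_gt_2 \<delta>_le_1 mult_right_mono[OF \<delta>_le_1, of "real d0"] by linarith

lemma t_pos: "t > 0"
  using d0_gt_2 by simp

lemma restr_y_in_code: "v \<in> R \<Longrightarrow> restr nbr y v \<in> C0"
  using y_tanner unfolding tanner_def by auto

lemma length_restr [simp]: "length (restr nbr x v) = length (nbr v)"
  and nth_restr [simp]: "k < length (nbr v) \<Longrightarrow> restr nbr x v ! k = x ! (nbr v ! k)"
  unfolding restr_def by simp_all

lemma dec_in_code: "dec x v \<in> C0"
  unfolding dec_def by (rule decode_in_code[OF finite_code code_nonempty])

lemma dec_dist_le: "w \<in> C0 \<Longrightarrow> dec_dist x v \<le> hdist w (restr nbr x v)"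
  unfolding dec_dist_def dec_def by (rule decode_dist_le[OF finite_code code_nonempty])

lemma length_dec: "length (dec x v) = d"
  using dec_in_code code_length by auto

lemma err_subset: "err x \<subseteq> {..<n}"
  unfolding err_def Fset_def by auto

lemma finite_err: "finite (err x)"
  using err_subset finite_subset by blast

lemma hdist_restr_y:
  assumes "v \<in> R"
  shows "hdist (restr nbr x v) (restr nbr y v) = err_at x v"
proof -
  let ?K = "{k. k < length (nbr v) \<and> x ! (nbr v ! k) \<noteq> y ! (nbr v ! k)}"
  have "nbr v ! k < n" if "k < length (nbr v)" for k
    using nbr_subset[OF assms] nth_mem[OF that] by blast
  then have "(!) (nbr v) ` ?K = set (nbr v) \<inter> err x"
    unfolding err_def Fset_def by (auto simp: in_set_conv_nth)
  moreover have "inj_on ((!) (nbr v)) ?K"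
    using nbr_distinct[OF assms] by (auto intro: inj_on_nth)
  ultimately have "card ?K = err_at x v"
    unfolding err_at_def using card_image by fastforce
  moreover have "hdist (restr nbr x v) (restr nbr y v) = card ?K"
    unfolding hdist_def by (intro arg_cong[where f = card]) auto
  ultimately show ?thesis
    by simp
qed

lemma restr_eq_y_if_err_at_0:
  "v \<in> R \<Longrightarrow> err_at x v = 0 \<Longrightarrow> restr nbr x v = restr nbr y v"
  using hdist_eq_0_iff[of "restr nbr x v" "restr nbr y v"] hdist_restr_y by simp

lemma dec_dist_le_err_at:
  assumes "v \<in> R"
  shows "dec_dist x v \<le> err_at x v"
proof -
  have "dec_dist x v \<le> hdist (restr nbr y v) (restr nbr x v)"
    by (rule dec_dist_le[OF restr_y_in_code[OF assms]])
  also have "\<dots> = err_at x v"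
    using hdist_commute[of "restr nbr y v" "restr nbr x v"] hdist_restr_y[OF assms] by simp
  finally show ?thesis .
qed

lemma d0_le_if_dec_wrong:
  assumes "v \<in> R" "dec x v \<noteq> restr nbr y v"
  shows "d0 \<le> dec_dist x v + err_at x v"
proof -
  have "d0 \<le> hdist (dec x v) (restr nbr y v)"
    using code_dist[OF dec_in_code restr_y_in_code] assms by blast
  also have "\<dots> \<le> dec_dist x v + hdist (restr nbr x v) (restr nbr y v)"
    unfolding dec_dist_def using length_dec nbr_length[OF assms(1)] by (intro hdist_triangle) auto
  finally show ?thesis
    using hdist_restr_y[OF assms(1)] by simp
qed

lemma dec_correct_if_err_at_lt:
  assumes "v \<in> R" "real (err_at x v) < t"
  shows "dec x v = restr nbr y v"
proof (rule ccontr)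
  assume "dec x v \<noteq> restr nbr y v"
  then have "d0 \<le> dec_dist x v + err_at x v"
    by (rule d0_le_if_dec_wrong[OF assms(1)])
  then show False
    using dec_dist_le_err_at[OF assms(1), of x] assms(2) by linarith
qed

lemma target_props:
  assumes "v \<in> R" "votes x v"
  shows target_in_nbr: "target x v \<in> set (nbr v)"
    and target_in_err_if_dec_correct: "dec x v = restr nbr y v \<Longrightarrow> target x v \<in> err x"
proof -
  let ?D = "{nbr v ! k | k. k < length (nbr v) \<and> dec x v ! k \<noteq> x ! (nbr v ! k)}"
  have "dec_dist x v \<noteq> 0"
    using assms(2) unfolding votes_def by auto
  then have "{k. k < length (dec x v) \<and> dec x v ! k \<noteq> restr nbr x v ! k} \<noteq> {}"
    unfolding dec_dist_def hdist_def by (metis card.empty)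
  then obtain k where "k < length (dec x v)" "dec x v ! k \<noteq> restr nbr x v ! k"
    by auto
  then have "nbr v ! k \<in> ?D"
    using length_dec nbr_length[OF assms(1)] by auto
  then have "?D \<noteq> {}"
    by auto
  moreover have "finite ?D"
    by (rule finite_subset[of _ "set (nbr v)"]) auto
  ultimately have "target x v \<in> ?D"
    unfolding target_def by (intro Min_in)
  then obtain j where j: "j < length (nbr v)" "target x v = nbr v ! j" "dec x v ! j \<noteq> x ! (nbr v ! j)"
    by auto
  then show "target x v \<in> set (nbr v)"
    by simp
  have "nbr v ! j < n"
    using nbr_subset[OF assms(1)] nth_mem[OF j(1)] by blast
  moreover assume "dec x v = restr nbr y v"
  ultimately show "target x v \<in> err x"
    using j unfolding err_def Fset_def by auto
qed

lemma err_at_gt_if_target_correct: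
  assumes "v \<in> R" "votes x v" "target x v \<notin> err x"
  shows "t < real (err_at x v)"
proof -
  have "dec x v \<noteq> restr nbr y v"
    using target_in_err_if_dec_correct[OF assms(1,2)] assms(3) by blast
  then have "d0 \<le> dec_dist x v + err_at x v"
    by (rule d0_le_if_dec_wrong[OF assms(1)])
  then show ?thesis
    using assms(2) unfolding votes_def by linarith
qed

section \<open>Counting unsatisfied checks\<close>

lemma sum_err_at: "(\<Sum>v\<in>R. err_at x v) = c * card (err x)"
proof -
  have "(\<Sum>v\<in>R. err_at x v) = (\<Sum>v\<in>R. \<Sum>i\<in>err x. if i \<in> set (nbr v) then 1 else 0)"
    unfolding err_at_def by (simp add: sum.If_cases[OF finite_err] Int_commute)
  also have "\<dots> = (\<Sum>i\<in>err x. \<Sum>v\<in>R. if i \<in> set (nbr v) then 1 else 0)"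
    by (rule sum.swap)
  also have "\<dots> = (\<Sum>i\<in>err x. c)"
    using err_subset left_degree by (intro sum.cong) (auto simp: sum.If_cases[OF finite_R] Int_def)
  finally show ?thesis
    by simp
qed

lemma Nb_err_eq: "Nb R nbr (err x) = {v\<in>R. err_at x v \<noteq> 0}"
  unfolding Nb_def err_at_def by auto

lemma Uset_subset_Nb_err: "Uset R nbr C0 x \<subseteq> Nb R nbr (err x)"
  using restr_eq_y_if_err_at_0 restr_y_in_code unfolding Nb_err_eq Uset_def by force

lemma card_Uset_le_card_R: "card (Uset R nbr C0 x) \<le> card R"
  unfolding Uset_def using finite_R by (intro card_mono) auto

lemma card_Uset_le: "real (card (Uset R nbr C0 x)) \<le> real c * real (card (err x))"
proof -
  have "card (Uset R nbr C0 x) \<le> card {v\<in>R. err_at x v \<noteq> 0}"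
    using Uset_subset_Nb_err finite_R unfolding Nb_err_eq by (intro card_mono) auto
  also have "\<dots> = (\<Sum>v | v \<in> R \<and> err_at x v \<noteq> 0. 1)"
    by simp
  also have "\<dots> \<le> (\<Sum>v | v \<in> R \<and> err_at x v \<noteq> 0. err_at x v)"
    by (rule sum_mono) auto
  also have "\<dots> = (\<Sum>v\<in>R. err_at x v)"
    using finite_R by (intro sum.mono_neutral_left) auto
  finally have "card (Uset R nbr C0 x) \<le> c * card (err x)"
    unfolding sum_err_at .
  then show ?thesis
    by (simp only: of_nat_mult[symmetric] of_nat_le_iff)
qed

text \<open>A check seeing between 1 and d0 - 1 errors cannot be satisfied, so counting
  the neighbours of the error set with weights err_at turns expansion into a lower bound on |U|.\<close>
lemma card_Uset_ge:
  assumes "real (card (err x)) \<le> \<alpha> * real n"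
  shows "real c * real (card (err x)) * (\<delta> * real d0 - 1) \<le> (real d0 - 1) * real (card (Uset R nbr C0 x))"
proof -
  define A where "A = {v\<in>R. d0 \<le> err_at x v}"
  define B where "B = {v\<in>R. err_at x v \<noteq> 0 \<and> err_at x v < d0}"
  have fin: "finite A" "finite B"
    unfolding A_def B_def using finite_R by auto
  have disj: "A \<inter> B = {}"
    unfolding A_def B_def by auto
  have Nb: "Nb R nbr (err x) = A \<union> B"
    unfolding Nb_err_eq A_def B_def using d0_gt_2 by auto
  have "B \<subseteq> Uset R nbr C0 x"
  proof
    fix v
    assume v: "v \<in> B"
    then have "restr nbr x v \<noteq> restr nbr y v" "hdist (restr nbr x v) (restr nbr y v) < d0"
      using hdist_restr_y[of v x] unfolding B_def by auto
    then show "v \<in> Uset R nbr C0 x"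
      using v code_dist[OF _ restr_y_in_code] unfolding B_def Uset_def by fastforce
  qed
  then have B_le: "card B \<le> card (Uset R nbr C0 x)"
    using finite_R by (intro card_mono) (auto simp: Uset_def)
  have "d0 * card A + card B \<le> (\<Sum>v\<in>A. err_at x v) + (\<Sum>v\<in>B. err_at x v)"
    using sum_mono[of A "\<lambda>_. d0" "err_at x"] sum_mono[of B "\<lambda>_. 1" "err_at x"]
    unfolding A_def B_def by (simp add: mult.commute)
  also have "\<dots> \<le> (\<Sum>v\<in>R. err_at x v)"
    unfolding sum.union_disjoint[OF fin disj, symmetric]
    using finite_R by (intro sum_mono2) (auto simp: A_def B_def)
  finally have upper: "real d0 * card A + card B \<le> real c * card (err x)"
    unfolding sum_err_at by (metis of_nat_add of_nat_le_iff of_nat_mult)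
  have "\<delta> * real c * card (err x) \<le> card A + card B"
    using expansion[OF err_subset assms] card_Un_disjoint[OF fin disj] unfolding Nb by simp
  then have "real d0 * (\<delta> * real c * card (err x)) \<le> real d0 * (card A + card B)"
    by (intro mult_left_mono) auto
  then have "real c * card (err x) * (\<delta> * real d0 - 1) \<le> (real d0 - 1) * card B"
    using upper by (simp add: algebra_simps)
  also have "\<dots> \<le> (real d0 - 1) * card (Uset R nbr C0 x)"
    using B_le d0_gt_2 by (intro mult_left_mono) auto
  finally show ?thesis .
qed

section \<open>One DeterFlip step\<close>

abbreviation "p x i \<equiv> pval R nbr C0 c t x i"
abbreviation "W \<equiv> Wset c d0"
abbreviation "flip x q \<equiv> deterflip n R nbr C0 c t x q"

lemma pval_eq: "p x i = (\<Sum>v | v \<in> R \<and> votes x v \<and> i = target x v. vote_weight x v)"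
  unfolding pval_def votes_def target_def vote_weight_def dec_dist_def dec_def Let_def by simp

lemma pval_in_Wset: "p x i \<in> W"
proof -
  define S where "S = {v. v \<in> R \<and> votes x v \<and> i = target x v}"
  have weight: "vote_weight x v = real (d0 - 2 * dec_dist x v) / (real c * real d0)" if "v \<in> S" for v
  proof -
    have "real (2 * dec_dist x v) < real d0"
      using that unfolding S_def votes_def by simp
    then have "2 * dec_dist x v \<le> d0"
      by simp
    then show ?thesis
      unfolding vote_weight_def using c_pos d0_gt_2 by (simp add: of_nat_diff field_simps)
  qed
  have "card S \<le> c"
  proof (cases "S = {}")
    case False
    then have "i < n" "S \<subseteq> {v\<in>R. i \<in> set (nbr v)}"
      unfolding S_def using target_in_nbr nbr_subset by blast+
    then show ?thesis
      using left_degree[of i] finite_R card_mono[of "{v\<in>R. i \<in> set (nbr v)}" S] by simp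
  qed simp
  then have "(\<Sum>v\<in>S. d0 - 2 * dec_dist x v) \<le> c * d0"
    using sum_mono[of S "\<lambda>v. d0 - 2 * dec_dist x v" "\<lambda>_. d0"] le_trans by fastforce
  moreover have "p x i = real (\<Sum>v\<in>S. d0 - 2 * dec_dist x v) / (real c * real d0)"
    unfolding pval_eq S_def[symmetric] using weight by (simp add: sum_divide_distrib)
  ultimately show ?thesis
    unfolding Wset_def by blast
qed

lemma length_deterflip: "length (flip x q) = n"
  unfolding deterflip_def by simp

lemma nth_deterflip: "i < n \<Longrightarrow> flip x q ! i = (if p x i = q then \<not> x ! i else x ! i)"
  unfolding deterflip_def by simp

definition "fixed x q = card {i\<in>err x. p x i = q}"
definition "broken x q = card {i\<in>{..<n} - err x. p x i = q}"

lemma card_err_deterflip: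
  "real (card (err (flip x q))) = real (card (err x)) - real (fixed x q) + real (broken x q)"
proof -
  have "err (flip x q) = {i\<in>err x. p x i \<noteq> q} \<union> {i\<in>{..<n} - err x. p x i = q}"
    unfolding err_def Fset_def using nth_deterflip by auto
  then have "card (err (flip x q)) = card {i\<in>err x. p x i \<noteq> q} + broken x q"
    unfolding broken_def using finite_err by (simp add: card_Un_disjoint disjoint_iff)
  moreover have "card {i\<in>err x. p x i \<noteq> q} + fixed x q
      = card ({i\<in>err x. p x i \<noteq> q} \<union> {i\<in>err x. p x i = q})"
    unfolding fixed_def using finite_err by (intro card_Un_disjoint[symmetric]) auto
  moreover have "{i\<in>err x. p x i \<noteq> q} \<union> {i\<in>err x. p x i = q} = err x"
    by auto
  ultimately show ?thesis
    by simp
qed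

text \<open>A correct bit is flipped only if it is the target of a check that decodes wrongly; such
  a check sees more than t errors, and there are at most c |F| / t of them.\<close>
lemma broken_le:
  assumes "q \<noteq> 0"
  shows "t * real (broken x q) \<le> real c * real (card (err x))"
proof -
  define Z where "Z = {v\<in>R. t < real (err_at x v)}"
  have "{i\<in>{..<n} - err x. p x i = q} \<subseteq> target x ` Z"
  proof
    fix i
    assume i: "i \<in> {i\<in>{..<n} - err x. p x i = q}"
    then have "{v. v \<in> R \<and> votes x v \<and> i = target x v} \<noteq> {}"
      using assms unfolding pval_eq by force
    then obtain v where "v \<in> R" "votes x v" "i = target x v"
      by auto
    then show "i \<in> target x ` Z"
      using i err_at_gt_if_target_correct unfolding Z_def by blast
  qed
  moreover have "finite Z"
    unfolding Z_def using finite_R by simp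
  ultimately have "broken x q \<le> card (target x ` Z)"
    unfolding broken_def by (intro card_mono) auto
  also have "\<dots> \<le> card Z"
    using \<open>finite Z\<close> by (rule card_image_le)
  finally have "t * real (broken x q) \<le> (\<Sum>v\<in>Z. t)"
    using t_pos by simp
  also have "\<dots> \<le> (\<Sum>v\<in>R. real (err_at x v))"
    using finite_R by (intro sum_le_included[where i = id]) (auto simp: Z_def)
  also have "\<dots> = real c * real (card (err x))"
    using sum_err_at[of x] by (metis of_nat_mult of_nat_sum)
  finally show ?thesis .
qed

lemma card_err_deterflip_le:
  assumes "q \<noteq> 0"
  shows "real (card (err (flip x q))) \<le> (1 + real c / t) * real (card (err x))"
proof -
  have "real (broken x q) \<le> real c * real (card (err x)) / t"
    using broken_le[OF assms, of x] t_pos by (simp add: field_simps)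
  then have "real (card (err (flip x q))) \<le> real (card (err x)) + real c * real (card (err x)) / t"
    using card_err_deterflip[of x q] by linarith
  then show ?thesis
    by (simp add: algebra_simps)
qed

definition "sign x i = (if i \<in> err x then 1 else - 1 :: real)"
definition "signed_vote x v = (if votes x v then sign x (target x v) * vote_weight x v else 0)"

lemma sum_sign_pval: "(\<Sum>i<n. sign x i * p x i) = (\<Sum>v\<in>R. signed_vote x v)"
proof -
  have "(\<Sum>i<n. sign x i * p x i)
      = (\<Sum>i<n. \<Sum>v\<in>R. if votes x v \<and> i = target x v then sign x (target x v) * vote_weight x v else 0)"
    unfolding pval_eq sum_distrib_left using finite_R by (simp add: sum.inter_filter)
  also have "\<dots> = (\<Sum>v\<in>R. \<Sum>i<n. if votes x v \<and> i = target x v then sign x (target x v) * vote_weight x v else 0)"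
    by (rule sum.swap)
  also have "\<dots> = (\<Sum>v\<in>R. signed_vote x v)"
  proof (intro sum.cong refl)
    fix v
    assume "v \<in> R"
    then have "votes x v \<Longrightarrow> target x v < n"
      using target_in_nbr nbr_subset by blast
    then show "(\<Sum>i<n. if votes x v \<and> i = target x v then sign x (target x v) * vote_weight x v else 0)
        = signed_vote x v"
      unfolding signed_vote_def by (cases "votes x v") (simp_all add: sum.delta')
  qed
  finally show ?thesis .
qed

lemma signed_vote_ge_if_votes:
  assumes "v \<in> R" "votes x v"
  shows "(t - real (err_at x v)) / (real c * t) \<le> signed_vote x v"
proof (cases "target x v \<in> err x")
  case True
  then have "signed_vote x v = (t - real (dec_dist x v)) / (real c * t)"
    using assms(2) unfolding signed_vote_def sign_def vote_weight_def by simp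
  then show ?thesis
    using dec_dist_le_err_at[OF assms(1), of x] c_pos t_pos by (simp add: divide_right_mono)
next
  case False
  then have "signed_vote x v = (real (dec_dist x v) - t) / (real c * t)"
    using assms(2) unfolding signed_vote_def sign_def vote_weight_def by (simp add: minus_divide_left)
  moreover have "d0 \<le> dec_dist x v + err_at x v"
    using d0_le_if_dec_wrong[OF assms(1)] target_in_err_if_dec_correct[OF assms] False by blast
  ultimately show ?thesis
    using c_pos t_pos by (simp add: divide_right_mono)
qed

lemma err_at_ge_if_not_votes:
  assumes "v \<in> R" "\<not> votes x v" "err_at x v \<noteq> 0"
  shows "t \<le> real (err_at x v)"
proof (rule ccontr)
  assume small: "\<not> t \<le> real (err_at x v)"
  then have "dec x v = restr nbr y v"
    using dec_correct_if_err_at_lt[OF assms(1)] by simp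
  then have "dec_dist x v = err_at x v"
    unfolding dec_dist_def using hdist_commute hdist_restr_y[OF assms(1)] by simp
  then show False
    using assms(2,3) small unfolding votes_def by simp
qed

lemma sum_signed_vote_ge:
  "(t * real (card (Nb R nbr (err x))) - real c * real (card (err x))) / (real c * t)
     \<le> (\<Sum>v\<in>R. signed_vote x v)"
proof -
  have "(\<Sum>v\<in>R. if err_at x v \<noteq> 0 then (t - real (err_at x v)) / (real c * t) else 0)
      \<le> (\<Sum>v\<in>R. signed_vote x v)"
  proof (rule sum_mono)
    fix v
    assume v: "v \<in> R"
    show "(if err_at x v \<noteq> 0 then (t - real (err_at x v)) / (real c * t) else 0) \<le> signed_vote x v"
    proof (cases "votes x v")
      case True
      moreover have "0 < dec_dist x v"
        using True unfolding votes_def by simp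
      then have "err_at x v \<noteq> 0"
        using dec_dist_le_err_at[OF v, of x] by simp
      ultimately show ?thesis
        using signed_vote_ge_if_votes[OF v] by simp
    next
      case False
      then show ?thesis
        using err_at_ge_if_not_votes[OF v False] c_pos t_pos
        unfolding signed_vote_def by (simp add: divide_nonpos_pos)
    qed
  qed
  moreover have "(\<Sum>v\<in>R. if err_at x v \<noteq> 0 then (t - real (err_at x v)) / (real c * t) else 0)
      = (t * real (card (Nb R nbr (err x))) - real c * real (card (err x))) / (real c * t)"
  proof -
    have "(\<Sum>v\<in>Nb R nbr (err x). real (err_at x v)) = (\<Sum>v\<in>R. real (err_at x v))"
      unfolding Nb_err_eq using finite_R by (intro sum.mono_neutral_left) auto
    then show ?thesis
      unfolding sum.inter_filter[OF finite_R, symmetric] Nb_err_eq[symmetric] sum_divide_distrib[symmetric]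
      using sum_err_at[of x] by (simp add: sum_subtractf) (metis of_nat_mult of_nat_sum)
  qed
  ultimately show ?thesis
    by simp
qed

lemma sum_sign_level_set: "(\<Sum>i | i < n \<and> p x i = q. sign x i) = real (fixed x q) - real (broken x q)"
proof -
  have "{i. i < n \<and> p x i = q} = {i\<in>err x. p x i = q} \<union> {i\<in>{..<n} - err x. p x i = q}"
    using err_subset by auto
  then have "(\<Sum>i | i < n \<and> p x i = q. sign x i)
      = (\<Sum>i\<in>{i\<in>err x. p x i = q}. sign x i) + (\<Sum>i\<in>{i\<in>{..<n} - err x. p x i = q}. sign x i)"
    using finite_err by (simp add: sum.union_disjoint disjoint_iff)
  then show ?thesis
    unfolding fixed_def broken_def sign_def by simp
qed

lemma sum_sign_pval_by_value:
  "(\<Sum>i<n. sign x i * p x i) = (\<Sum>q\<in>W - {0}. q * (real (fixed x q) - real (broken x q)))"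
proof -
  have "(\<Sum>i<n. sign x i * p x i) = (\<Sum>q\<in>W. \<Sum>i | i < n \<and> p x i = q. sign x i * p x i)"
    using sum.group[of "{..<n}" W "p x" "\<lambda>i. sign x i * p x i"] finite_Wset pval_in_Wset
    by (auto simp: image_subset_iff)
  also have "\<dots> = (\<Sum>q\<in>W. q * (real (fixed x q) - real (broken x q)))"
    unfolding sum_sign_level_set[symmetric] sum_distrib_left
    by (intro sum.cong refl) (auto simp: mult.commute)
  also have "\<dots> = (\<Sum>q\<in>W - {0}. q * (real (fixed x q) - real (broken x q)))"
    using finite_Wset by (intro sum.mono_neutral_right) auto
  finally show ?thesis .
qed

lemma sum_fixed_broken_ge:
  assumes "real (card (err x)) \<le> \<alpha> * real n"
  shows "real (card (err x)) * (t * \<delta> - 1) / t \<le> (\<Sum>q\<in>W - {0}. q * (real (fixed x q) - real (broken x q)))"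
proof -
  have "t * (\<delta> * real c * card (err x)) \<le> t * card (Nb R nbr (err x))"
    using expansion[OF err_subset assms] t_pos by simp
  then have "(t * (\<delta> * real c * card (err x)) - real c * card (err x)) / (real c * t)
      \<le> (t * card (Nb R nbr (err x)) - real c * card (err x)) / (real c * t)"
    using c_pos t_pos by (intro divide_right_mono) auto
  moreover have "(t * (\<delta> * real c * card (err x)) - real c * card (err x)) / (real c * t)
      = real (card (err x)) * (t * \<delta> - 1) / t"
    using c_pos t_pos by (simp add: field_simps)
  ultimately show ?thesis
    using sum_signed_vote_ge[of x] sum_sign_pval[of x] sum_sign_pval_by_value[of x] by simp
qed

definition "\<epsilon> = (t - 1 / \<delta>) * \<delta> / (2 * real c * t ^ 2)"

lemma \<epsilon>_eq: "\<epsilon> = (t * \<delta> - 1) / (t * real c * real d0)"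
  unfolding \<epsilon>_def using \<delta>_d0_gt_2 c_pos d0_gt_2
  by (simp add: field_simps power2_eq_square) (smt (verit) mult_eq_0_iff)

lemma t_\<delta>_gt_1: "1 < t * \<delta>"
  using \<delta>_d0_gt_2 by (simp add: mult.commute)

lemma \<epsilon>_bounds: "0 < \<epsilon>" "\<epsilon> < 1"
proof -
  have "1 \<le> c * d0"
    using c_pos d0_gt_2 by (simp add: Suc_le_eq)
  then have "\<delta> \<le> real c * real d0"
    using \<delta>_le_1 by (metis of_nat_1 of_nat_le_iff of_nat_mult order_trans)
  then have "t * \<delta> \<le> t * (real c * real d0)"
    using t_pos by (intro mult_left_mono) auto
  then have "t * \<delta> - 1 < t * real c * real d0"
    unfolding mult.assoc by linarith
  moreover have "0 < t * real c * real d0"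
    using c_pos d0_gt_2 by simp
  ultimately show "0 < \<epsilon>" "\<epsilon> < 1"
    unfolding \<epsilon>_eq using t_\<delta>_gt_1 by simp_all
qed

lemma ex_deterflip_progress:
  assumes "real (card (err x)) \<le> \<alpha> * real n"
  shows "\<exists>q\<in>W - {0}. real (card (err (flip x q))) \<le> (1 - \<epsilon>) * real (card (err x))"
proof -
  define f where "f = real (card (err x))"
  define X where "X = f * (t * \<delta> - 1) / t"
  have Q: "finite (W - {0})" "W - {0} \<noteq> {}" "card (W - {0}) \<le> c * d0"
    using finite_Wset one_in_Wset[of c d0] c_pos d0_gt_2 card_Wset_nonzero_le by auto
  have "0 \<le> X"
    unfolding X_def f_def using t_\<delta>_gt_1 t_pos by simp
  then obtain q where q: "q \<in> W - {0}" "X / card (W - {0}) \<le> real (fixed x q) - real (broken x q)"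
    using ex_ge_average_of_weighted_sum[OF Q(1,2), of id X] Wset_bounds[of c d0] c_pos d0_gt_2
      sum_fixed_broken_ge[OF assms] unfolding X_def f_def by fastforce
  have "0 < card (W - {0})" "real (card (W - {0})) \<le> real c * real d0"
    using Q by (simp_all add: card_gt_0_iff) (metis of_nat_le_iff of_nat_mult)
  then have "X / (c * d0) \<le> X / card (W - {0})"
    using \<open>0 \<le> X\<close> by (intro divide_left_mono) simp_all
  moreover have "X / (c * d0) = \<epsilon> * f"
    unfolding X_def \<epsilon>_eq using c_pos t_pos by (simp add: field_simps)
  ultimately have "real (card (err (flip x q))) \<le> f - \<epsilon> * f"
    using q(2) card_err_deterflip[of x q] unfolding f_def by linarith
  then show ?thesis
    using q(1) unfolding f_def by (auto simp: algebra_simps)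
qed

section \<open>Runs of DeterFlip within the error budget\<close>

definition "\<gamma> = inverse (1 + real c / t) * ((\<delta> * real d0 - 1) / (real d0 - 1)) * \<alpha>"
definition "budget = \<alpha> * real n * (t / (t + real c))"

abbreviation "run x qs \<equiv> run_seq n R nbr C0 c t \<gamma> x qs"
abbreviation "U x \<equiv> card (Uset R nbr C0 x)"

lemma \<gamma>_n_eq: "\<gamma> * real n = budget * ((\<delta> * real d0 - 1) / (real d0 - 1))"
proof -
  have "inverse (1 + real c / t) = t / (t + real c)"
    using t_pos by (simp add: field_simps)
  then show ?thesis
    unfolding \<gamma>_def budget_def by simp
qed

lemma expansion_factor_bounds: "0 < (\<delta> * real d0 - 1) / (real d0 - 1)" "(\<delta> * real d0 - 1) / (real d0 - 1) \<le> 1"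
  using \<delta>_d0_gt_2 d0_gt_2 mult_right_mono[OF \<delta>_le_1, of "real d0"] by auto

lemma budget_nonneg: "0 \<le> budget"
  unfolding budget_def using \<alpha>_pos t_pos by simp

lemma \<gamma>_n_le_budget: "\<gamma> * real n \<le> budget"
  unfolding \<gamma>_n_eq by (rule mult_left_le) (use expansion_factor_bounds budget_nonneg in auto)

lemma budget_le: "budget \<le> \<alpha> * real n"
  unfolding budget_def by (rule mult_left_le) (use \<alpha>_pos t_pos in auto)

lemma growth_of_budget: "(1 + real c / t) * budget = \<alpha> * real n"
proof -
  define T where "T = t"
  have "0 < T" "T + real c \<noteq> 0"
    unfolding T_def using t_pos by simp_all
  moreover have "1 + real c / T = (T + real c) / T"
    using \<open>0 < T\<close> by (simp add: field_simps)
  ultimately have "(1 + real c / T) * (T / (T + real c)) = 1"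
    by simp
  then show ?thesis
    unfolding budget_def T_def by (metis mult.left_commute mult_1_right)
qed

text \<open>The second hypothesis is the abandon test of DeepFlip.\<close>
lemma err_le_budget_if_kept:
  assumes "real (card (err x)) \<le> \<alpha> * real n" "real (U x) \<le> real c * \<gamma> * real n"
  shows "real (card (err x)) \<le> budget"
proof -
  let ?\<rho> = "(\<delta> * real d0 - 1) / (real d0 - 1)"
  have "real c * (real (card (err x)) * (\<delta> * real d0 - 1)) \<le> real c * ((real d0 - 1) * (\<gamma> * real n))"
    using card_Uset_ge[OF assms(1)] mult_left_mono[OF assms(2), of "real d0 - 1"] d0_gt_2
    by (simp add: algebra_simps)
  then have "real (card (err x)) * (\<delta> * real d0 - 1) \<le> (real d0 - 1) * (\<gamma> * real n)"
    using c_pos by (simp add: mult_le_cancel_left_pos)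
  then have "real (card (err x)) * ?\<rho> \<le> budget * ?\<rho>"
    using d0_gt_2 unfolding \<gamma>_n_eq[symmetric] by (simp add: field_simps)
  then show ?thesis
    using expansion_factor_bounds(1) by (rule mult_right_le_imp_le)
qed

lemma run_within_budget:
  assumes "set qs \<subseteq> W - {0}" "length x = n" "real (card (err x)) \<le> budget" "fst (run x qs) = Some r"
  shows "length r = n \<and> real (card (err r)) \<le> budget"
  using assms
proof (induction qs arbitrary: x)
  case (Cons q qs)
  have kept: "\<not> real c * \<gamma> * real n < real (U (flip x q))" and rest: "fst (run (flip x q) qs) = Some r"
    using Cons.prems(4) by (auto simp: Let_def split: prod.splits if_splits)
  have "real (card (err (flip x q))) \<le> (1 + real c / t) * real (card (err x))"
    using Cons.prems(1) by (intro card_err_deterflip_le) auto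
  also have "\<dots> \<le> (1 + real c / t) * budget"
    using Cons.prems(3) t_pos by (intro mult_left_mono) auto
  finally have "real (card (err (flip x q))) \<le> budget"
    using err_le_budget_if_kept kept unfolding growth_of_budget by simp
  then show ?case
    using Cons.IH[OF _ length_deterflip _ rest] Cons.prems(1) by simp
qed simp

lemma step_cost_deterflip_le:
  assumes "q \<noteq> 0"
  shows "real (step_cost R nbr C0 x (flip x q)) \<le> 1 + 2 * real c * ((1 + real c / t) * real (card (err x)))"
proof -
  let ?B = "(1 + real c / t) * real (card (err x))"
  have "real (card (err x)) \<le> ?B"
    using t_pos by (simp add: algebra_simps)
  then have "real (U x) \<le> real c * ?B"
    using card_Uset_le[of x] mult_left_mono[of _ ?B "real c"] by (meson of_nat_0_le_iff order_trans)
  moreover have "real (U (flip x q)) \<le> real c * ?B"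
    using card_Uset_le[of "flip x q"] mult_left_mono[OF card_err_deterflip_le[OF assms, of x], of "real c"]
    by simp
  ultimately show ?thesis
    unfolding step_cost_def by simp
qed

lemma run_cost_le:
  assumes "0 \<notin> set qs"
  shows "real (snd (run x qs))
           \<le> real (length qs) * (1 + 2 * real c * ((1 + real c / t) ^ length qs * real (card (err x))))"
  using assms
proof (induction qs arbitrary: x)
  case (Cons q qs)
  define G where "G = 1 + real c / t"
  define f where "f = real (card (err x))"
  let ?B = "1 + 2 * real c * (G ^ Suc (length qs) * f)"
  have "q \<noteq> 0" "0 \<notin> set qs"
    using Cons.prems by auto
  have "1 \<le> G"
    unfolding G_def using t_pos by simp
  have flip: "real (card (err (flip x q))) \<le> G * f"
    unfolding f_def G_def using \<open>q \<noteq> 0\<close> by (rule card_err_deterflip_le)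
  have "G * f \<le> G ^ Suc (length qs) * f"
    using \<open>1 \<le> G\<close> one_le_power[OF \<open>1 \<le> G\<close>, of "length qs"] unfolding f_def
    by (simp add: mult_right_mono)
  then have "2 * real c * (G * f) \<le> 2 * real c * (G ^ Suc (length qs) * f)"
    by (simp add: mult_left_mono)
  then have step: "real (step_cost R nbr C0 x (flip x q)) \<le> ?B"
    using step_cost_deterflip_le[OF \<open>q \<noteq> 0\<close>, of x] unfolding G_def f_def by linarith
  have "G ^ length qs * real (card (err (flip x q))) \<le> G ^ Suc (length qs) * f"
    using mult_left_mono[OF flip, of "G ^ length qs"] \<open>1 \<le> G\<close> by (simp add: mult_ac)
  then have "1 + 2 * real c * (G ^ length qs * real (card (err (flip x q)))) \<le> ?B"
    by (simp add: mult_left_mono)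
  then have "real (length qs) * (1 + 2 * real c * (G ^ length qs * real (card (err (flip x q)))))
      \<le> real (length qs) * ?B"
    by (rule mult_left_mono) simp
  then have rest: "real (snd (run (flip x q) qs)) \<le> real (length qs) * ?B"
    using Cons.IH[OF \<open>0 \<notin> set qs\<close>, of "flip x q"] unfolding G_def by linarith
  have "real (snd (run x (q # qs)))
      \<le> real (step_cost R nbr C0 x (flip x q)) + real (snd (run (flip x q) qs))"
    using snd_run_seq_Cons_le[of n R nbr C0 c t \<gamma> x q qs] by (simp only: of_nat_add[symmetric] of_nat_le_iff)
  also have "\<dots> \<le> (1 + real (length qs)) * ?B"
    using step rest by (simp add: distrib_right)
  finally show ?case
    unfolding G_def f_def by simp
qed simp

lemma ex_run_shrinking:
  assumes "real (card (err x)) \<le> \<gamma> * real n"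
  shows "\<exists>qs r k. length qs = m \<and> set qs \<subseteq> W - {0} \<and> run x qs = (Some r, k)
           \<and> real (card (err r)) \<le> (1 - \<epsilon>) ^ m * real (card (err x))"
  using assms
proof (induction m arbitrary: x)
  case (Suc m)
  have "real (card (err x)) \<le> \<alpha> * real n"
    using Suc.prems \<gamma>_n_le_budget budget_le by linarith
  then obtain q where q: "q \<in> W - {0}"
    and shrink: "real (card (err (flip x q))) \<le> (1 - \<epsilon>) * real (card (err x))"
    using ex_deterflip_progress by blast
  then have "real (card (err (flip x q))) \<le> real (card (err x))"
    using \<epsilon>_bounds mult_left_le_one_le[of "real (card (err x))" "1 - \<epsilon>"] by simp
  then have small: "real (card (err (flip x q))) \<le> \<gamma> * real n"
    using Suc.prems by simp
  then have "real (U (flip x q)) \<le> real c * (\<gamma> * real n)"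
    using card_Uset_le[of "flip x q"] mult_left_mono[OF small, of "real c"] by simp
  then have "\<not> real c * \<gamma> * real n < real (U (flip x q))"
    by (simp add: mult.assoc)
  moreover obtain qs r k where qs: "length qs = m" "set qs \<subseteq> W - {0}" "run (flip x q) qs = (Some r, k)"
    and r: "real (card (err r)) \<le> (1 - \<epsilon>) ^ m * real (card (err (flip x q)))"
    using Suc.IH[OF small] by blast
  ultimately have "run x (q # qs) = (Some r, step_cost R nbr C0 x (flip x q) + k)"
    by (simp add: Let_def)
  moreover have "real (card (err r)) \<le> (1 - \<epsilon>) ^ Suc m * real (card (err x))"
  proof -
    have "(1 - \<epsilon>) ^ m * real (card (err (flip x q))) \<le> (1 - \<epsilon>) ^ m * ((1 - \<epsilon>) * real (card (err x)))"
      using \<epsilon>_bounds by (intro mult_left_mono[OF shrink]) simp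
    then show ?thesis
      using r by (simp add: mult_ac)
  qed
  ultimately show ?case
    using q qs(1,2) by (intro exI[of _ "q # qs"]) auto
qed simp

section \<open>DeepFlip\<close>

abbreviation "deepflip seqs x \<equiv> deepflip_run n R nbr C0 c t \<gamma> seqs x"

lemma card_err_le_half_if_Uset_le:
  assumes "real (card (err z)) \<le> \<alpha> * real n"
    and "real (U z) \<le> real c * ((\<delta> * real d0 - 1) / (2 * (real d0 - 1))) * m"
  shows "real (card (err z)) \<le> m / 2"
proof -
  have "real c * real (card (err z)) * (\<delta> * real d0 - 1) \<le> (real d0 - 1) * real (U z)"
    by (rule card_Uset_ge[OF assms(1)])
  also have "\<dots> \<le> (real d0 - 1) * (real c * ((\<delta> * real d0 - 1) / (2 * (real d0 - 1))) * m)"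
    using assms(2) d0_gt_2 by (intro mult_left_mono) auto
  also have "\<dots> = real c * (\<delta> * real d0 - 1) * (m / 2)"
    using d0_gt_2 by (simp add: field_simps)
  finally have "real c * (\<delta> * real d0 - 1) * real (card (err z)) \<le> real c * (\<delta> * real d0 - 1) * (m / 2)"
    by (simp add: mult_ac)
  then show ?thesis
    by (rule mult_left_le_imp_le) (use c_pos \<delta>_d0_gt_2 in simp)
qed

lemma deepflip_halves_err:
  assumes "length x = n" "real (card (err x)) \<le> \<gamma> * real n"
    and "(1 - \<epsilon>) ^ s \<le> (\<delta> * real d0 - 1) / (2 * (real d0 - 1))"
    and "set seqs = {qs. length qs = s \<and> set qs \<subseteq> W - {0}}"
  shows "\<exists>x'. fst (deepflip seqs x) = Some x' \<and> length x' = n \<and> real (card (err x')) \<le> real (card (err x)) / 2"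
proof -
  define f where "f = real (card (err x))"
  obtain qs r k where qs: "qs \<in> set seqs" "run x qs = (Some r, k)"
    and r: "real (card (err r)) \<le> (1 - \<epsilon>) ^ s * f"
    using ex_run_shrinking[OF assms(2), of s] assms(4) unfolding f_def by auto
  have "U r < card R + 1"
    using card_Uset_le_card_R by (simp add: le_imp_less_Suc)
  then obtain qs' z where qs': "qs' \<in> set seqs" "fst (run x qs') = Some z"
    and z: "fst (deepflip seqs x) = Some z" "U z \<le> U r"
    using fold_deepflip_step_selects_min[of qs seqs "run x" r U "card R + 1" 0] qs
    unfolding deepflip_run_eq_fold Let_def by auto
  have budget: "real (card (err x)) \<le> budget"
    using assms(2) \<gamma>_n_le_budget by linarith
  have "length z = n" "real (card (err z)) \<le> budget"
    using run_within_budget[OF _ assms(1) budget qs'(2)] qs'(1) assms(4) by auto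
  have U_z: "real (U z) \<le> real c * ((\<delta> * real d0 - 1) / (2 * (real d0 - 1))) * f"
  proof -
    have "real (U z) \<le> real c * real (card (err r))"
      using z(2) card_Uset_le[of r] by linarith
    also have "\<dots> \<le> real c * ((1 - \<epsilon>) ^ s * f)"
      using r by (intro mult_left_mono) auto
    also have "\<dots> \<le> real c * ((\<delta> * real d0 - 1) / (2 * (real d0 - 1)) * f)"
      using assms(3) unfolding f_def by (intro mult_left_mono mult_right_mono) auto
    finally show ?thesis
      by (simp add: mult.assoc)
  qed
  have "real (card (err z)) \<le> \<alpha> * real n"
    using \<open>real (card (err z)) \<le> budget\<close> budget_le by linarith
  then have "real (card (err z)) \<le> f / 2"
    using U_z by (rule card_err_le_half_if_Uset_le)
  then show ?thesis
    using z(1) \<open>length z = n\<close> unfolding f_def by blast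
qed

lemma deepflip_cost_le:
  assumes "distinct seqs" "set seqs = {qs. length qs = s \<and> set qs \<subseteq> W - {0}}"
  shows "real (snd (deepflip seqs x))
           \<le> real (card (W - {0}) ^ s) * (real s * (1 + 2 * real c * (1 + real c / t) ^ s))
             * (1 + real (card (err x)))"
proof -
  define f where "f = real (card (err x))"
  define K where "K = 2 * real c * (1 + real c / t) ^ s"
  define B where "B = real s * ((1 + K) * (1 + f))"
  have "0 \<le> K" "0 \<le> f"
    unfolding K_def f_def using t_pos by simp_all
  have "(\<Sum>qs\<leftarrow>seqs. snd (run x qs)) = (\<Sum>qs\<in>set seqs. snd (run x qs))"
    by (rule sum_list_distinct_conv_sum_set[OF assms(1)])
  then have "real (snd (deepflip seqs x)) = (\<Sum>qs\<in>set seqs. real (snd (run x qs)))"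
    unfolding deepflip_run_eq_fold Let_def fold_deepflip_step_cost by simp
  also have "\<dots> \<le> real (card (set seqs)) * B"
  proof (rule sum_bounded_above)
    fix qs
    assume "qs \<in> set seqs"
    then have "length qs = s" "0 \<notin> set qs"
      using assms(2) by auto
    then have "real (snd (run x qs)) \<le> real s * (1 + K * f)"
      using run_cost_le[of qs x] unfolding f_def K_def by (simp add: mult.assoc)
    also have "\<dots> \<le> B"
      unfolding B_def using \<open>0 \<le> K\<close> \<open>0 \<le> f\<close> by (intro mult_left_mono) (simp_all add: algebra_simps)
    finally show "real (snd (run x qs)) \<le> B" .
  qed
  also have "card (set seqs) = card (W - {0}) ^ s"
  proof -
    have "set seqs = {qs. set qs \<subseteq> W - {0} \<and> length qs = s}"
      unfolding assms(2) by blast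
    then show ?thesis
      using finite_Wset card_lists_length_eq[of "W - {0}" s] by simp
  qed
  finally show ?thesis
    unfolding B_def K_def f_def by (simp add: mult.assoc)
qed

lemma power_\<epsilon>_steps_le:
  "(1 - \<epsilon>) ^ nat \<lceil>ln ((\<delta> * real d0 - 1) / (2 * (real d0 - 1))) / ln (1 - \<epsilon>)\<rceil>
     \<le> (\<delta> * real d0 - 1) / (2 * (real d0 - 1))"
  using power_ceiling_log_le[OF \<epsilon>_bounds] \<delta>_d0_gt_2 d0_gt_2 by simp

end

theorem theorem4p6:
  fixes c d d0 :: nat and \<alpha> \<delta> :: real and C0 :: "bool list set"
  assumes "0 < c" and "0 < d" and "0 < \<alpha>" and "\<alpha> \<le> 1" and "0 < \<delta>" and "\<delta> \<le> 1"
    and "linear_code d C0" and "min_dist C0 d0"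
    and "\<delta> * real d0 > 2"
  defines "t \<equiv> real d0 / 2"
    and "\<gamma> \<equiv> inverse (1 + real c / (real d0 / 2)) * ((\<delta> * real d0 - 1) / (real d0 - 1)) * \<alpha>"
    and "\<epsilon> \<equiv> (real d0 / 2 - 1 / \<delta>) * \<delta> / (2 * real c * (real d0 / 2) ^ 2)"
    and "s \<equiv> nat \<lceil>ln ((\<delta> * real d0 - 1) / (2 * (real d0 - 1))) / ln (1 - (real d0 / 2 - 1 / \<delta>) * \<delta> / (2 * real c * (real d0 / 2) ^ 2))\<rceil>"
  shows "\<exists>K::real. \<forall>n R nbr x y seqs.
           bipartite_expander n R nbr c d \<alpha> \<delta>
           \<and> length x = n \<and> y \<in> tanner n R nbr C0
           \<and> real (hdist x y) \<le> \<gamma> * real n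
           \<and> distinct seqs
           \<and> set seqs = {qs. length qs = s \<and> set qs \<subseteq> Wset c d0 - {0}}
           \<longrightarrow> (\<exists>x'. fst (deepflip_run n R nbr C0 c t \<gamma> seqs x) = Some x'
                    \<and> length x' = n
                    \<and> real (card (Fset n x' y)) \<le> real (card (Fset n x y)) / 2)
             \<and> real (snd (deepflip_run n R nbr C0 c t \<gamma> seqs x))
                 \<le> K * (1 + real (card (Fset n x y)))"
proof (intro exI[of _ "real (card (Wset c d0 - {0}) ^ s) * (real s * (1 + 2 * real c * (1 + real c / t) ^ s))"]
    allI impI, goal_cases)
  case (1 n R nbr x y seqs)
  then have H: "bipartite_expander n R nbr c d \<alpha> \<delta>" "length x = n" "y \<in> tanner n R nbr C0"
    "real (hdist x y) \<le> \<gamma> * real n" "distinct seqs" "set seqs = {qs. length qs = s \<and> set qs \<subseteq> Wset c d0 - {0}}"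
    by auto
  interpret T: tanner_decoding n R nbr c d d0 \<alpha> \<delta> C0 y
    using assms(1,3,6-9) H(1,3) by unfold_locales (auto simp: linear_code_def)
  have params: "T.\<gamma> = \<gamma>" "T.err x' = Fset n x' y" for x'
    unfolding T.\<gamma>_def \<gamma>_def T.err_def by simp_all
  have "hdist x y = card (Fset n x y)"
    unfolding hdist_def Fset_def using H(2) by simp
  then have "real (card (T.err x)) \<le> T.\<gamma> * real n"
    using H(4) params by simp
  moreover have "(1 - T.\<epsilon>) ^ s \<le> (\<delta> * real d0 - 1) / (2 * (real d0 - 1))"
    unfolding s_def T.\<epsilon>_def[symmetric] by (rule T.power_\<epsilon>_steps_le)
  ultimately show ?case
    using T.deepflip_halves_err[OF H(2) _ _ H(6)] T.deepflip_cost_le[OF H(5,6), of x]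
    unfolding t_def params by simp
qed

end
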